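(* Let $(\mathcal{L},\mathcal{L}_f,f)$ be a lattice reduction triple. Then the translation condition ($[\![\varphi]\!]_{M,\xi}\in f^{-1}(x)$ iff $[\![\varphi]\!]_{f(M),\xi}=x$, for every mv-CGS $M$ over $\mathcal{L}$ and every state or path $\xi$) is satisfied for all formulas of mv-ATL*$_\to$ over $\mathcal{L}$ iff the following conditions hold: C1: for all $x_1,x_2\in L$, $x_1<x_2\Rightarrow f(x_1)<f(x_2)$; C2: for all $x_1,x_2\in L$, $x_1\bowtie x_2\Rightarrow f(x_1)\bowtie f(x_2)$.
   Context: Let $\mathcal{L}=(L,\leq)$ be a finite lattice with meet $\sqcap$, join $\sqcup$, least element $\bot$ and greatest element $\top$; for a family of elements, $\inf$ denotes its greatest lower bound (lattice meet) and $\bigsqcup$ its least upper bound (lattice join). $x_1<x_2$ means $x_1\le x_2$ and $x_1\neq x_2$; $x_1\bowtie x_2$ means neither $x_1\le x_2$ nor $x_2\le x_1$. A lattice reduction triple (LRT) is $(\mathcal{L},\mathcal{L}_f,f)$ where $\mathcal{L}_f=(L_f,\leq_f)$ is a sublattice of $\mathcal{L}$ and $f:L\to L_f$ preserves arbitrary bounds: $f(\inf_{i\in I}x_i)=\inf_{i\in I}f(x_i)$ and $f(\bigsqcup_{i\in I}x_i)=\bigsqcup_{i\in I}f(x_i)$. A multi-valued concurrent game structure (mv-CGS) over an interpreted lattice $(L,\leq,\sigma)$ is $M=\langle \mathrm{Agt},Q,Act,d,t,AP,V,(L,\leq,\sigma)\rangle$ with finite sets of agents, states, actions and atomic propositions,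 action availability $d$, deterministic transition function $t$, valuation $V:AP\times Q\to L$, and $\sigma$ interpreting constant symbols. Its reduction $f(M)$ has the same components except valuation $V_f(p,q)=f(V(p,q))$ and constants interpreted by $f\circ\sigma$ over $(L_f,\leq_f)$. The logic mv-ATL*$_\to$ has state formulas $\varphi::=c\mid p\mid\varphi\wedge\varphi\mid\varphi\vee\varphi\mid\varphi\to\varphi\mid\langle\!\langle A\rangle\!\rangle\gamma\mid[\![A]\!]\gamma$ and path formulas $\gamma::=\varphi\mid\gamma\wedge\gamma\mid\gamma\vee\gamma\mid X\gamma\mid\gamma U\gamma\mid\gamma W\gamma$; semantics: $[\![c]\!]=\sigma(c)$, $[\![p]\!]_{M,q}=V(p,q)$, $\wedge,\vee$ by $\sqcap,\sqcup$, $[\![X\gamma]\!]_{M,\lambda}=[\![\gamma]\!]_{M,\lambda[1..\infty]}$, $[\![\gamma_1U\gamma_2]\!]_{M,\lambda}=\bigsqcup_{i\ge 0}\inf_{0\le j<i}\{[\![\gamma_2]\!]_{M,\lambda[i..\infty]}\sqcap[\![\gamma_1]\!]_{M,\lambda[j..\infty]}\}$, $[\![\gamma_1W\gamma_2]\!]_{M,\lambda}=\inf_{i\ge0}[\![\gamma_1]\!]_{M,\lambda[i..\infty]}\sqcup[\![\gamma_1U\gamma_2]\!]_{M,\lambda}$, $[\![\langle\!\langle A\rangle\!\rangle\gamma]\!]_{M,q}=\bigsqcup_{s_A}\inf_{\lambda\in out(q,s_A)}[\![\gamma]\!]_{M,\lambda}$, $[\![[\![A]\!]\gamma]\!]_{M,q}=\inf_{s_A}\bigsqcup_{\lambda\in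 out(q,s_A)}[\![\gamma]\!]_{M,\lambda}$, and $[\![\varphi_1\to\varphi_2]\!]_{M,q}=\top$ if $[\![\varphi_1]\!]_{M,q}\le[\![\varphi_2]\!]_{M,q}$ and $\bot$ otherwise. *)

theory Defs
  imports Main "HOL-Library.Finite_Lattice"
begin

text \<open>The finite lattice L is the whole type 'l (class finite_lattice_complete).
  L_f is given as a carrier set Lf: a (bounded) sublattice of L.\<close>

definition sublattice :: "'l::finite_lattice_complete set \<Rightarrow> bool" where
  "sublattice Lf \<longleftrightarrow> bot \<in> Lf \<and> top \<in> Lf \<and>
     (\<forall>x\<in>Lf. \<forall>y\<in>Lf. inf x y \<in> Lf \<and> sup x y \<in> Lf)"

definition lattice_reduction_triple ::
  "'l::finite_lattice_complete set \<Rightarrow> ('l \<Rightarrow> 'l) \<Rightarrow> bool" where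
  "lattice_reduction_triple Lf f \<longleftrightarrow> sublattice Lf \<and> (\<forall>x. f x \<in> Lf) \<and>
     (\<forall>A. f (Inf A) = Inf (f ` A)) \<and> (\<forall>A. f (Sup A) = Sup (f ` A))"

definition incomparable :: "'l::order \<Rightarrow> 'l \<Rightarrow> bool" where
  "incomparable x y \<longleftrightarrow> \<not> x \<le> y \<and> \<not> y \<le> x"

definition cond_C1 :: "('l::order \<Rightarrow> 'l) \<Rightarrow> bool" where
  "cond_C1 f \<longleftrightarrow> (\<forall>x1 x2. x1 < x2 \<longrightarrow> f x1 < f x2)"

definition cond_C2 :: "('l::order \<Rightarrow> 'l) \<Rightarrow> bool" where
  "cond_C2 f \<longleftrightarrow> (\<forall>x1 x2. incomparable x1 x2 \<longrightarrow> incomparable (f x1) (f x2))"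

text \<open>Agents, states, actions and atomic propositions are the types (required finite via sort annotations in the theorem)
  'ag, 'st, 'act, 'p; constant symbols are of type 'c.\<close>

record ('ag, 'st, 'act, 'p, 'c, 'l) mvcgs =
  avail :: "'ag \<Rightarrow> 'st \<Rightarrow> 'act set"
  trans :: "'st \<Rightarrow> ('ag \<Rightarrow> 'act) \<Rightarrow> 'st"
  val   :: "'p \<Rightarrow> 'st \<Rightarrow> 'l"
  interp :: "'c \<Rightarrow> 'l"

definition wf_mvcgs :: "('ag, 'st, 'act, 'p, 'c, 'l) mvcgs \<Rightarrow> bool" where
  "wf_mvcgs M \<longleftrightarrow> (\<forall>a q. avail M a q \<noteq> {})"

definition reduce :: "('l \<Rightarrow> 'l) \<Rightarrow> ('ag, 'st, 'act, 'p, 'c, 'l) mvcgs \<Rightarrow> ('ag, 'st, 'act, 'p, 'c, 'l) mvcgs" where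
  "reduce f M = M\<lparr> val := (\<lambda>p q. f (val M p q)), interp := (\<lambda>c. f (interp M c)) \<rparr>"

definition moves :: "('ag, 'st, 'act, 'p, 'c, 'l) mvcgs \<Rightarrow> 'st \<Rightarrow> ('ag \<Rightarrow> 'act) set" where
  "moves M q = {\<alpha>. \<forall>a. \<alpha> a \<in> avail M a q}"

definition is_path :: "('ag, 'st, 'act, 'p, 'c, 'l) mvcgs \<Rightarrow> (nat \<Rightarrow> 'st) \<Rightarrow> bool" where
  "is_path M \<rho> \<longleftrightarrow> (\<forall>i. \<exists>\<alpha>\<in>moves M (\<rho> i). \<rho> (Suc i) = trans M (\<rho> i) \<alpha>)"

definition strategies :: "('ag, 'st, 'act, 'p, 'c, 'l) mvcgs \<Rightarrow> 'ag set \<Rightarrow> ('ag \<Rightarrow> 'st list \<Rightarrow> 'act) set" where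
  "strategies M A = {s. \<forall>a\<in>A. \<forall>h. h \<noteq> [] \<longrightarrow> s a h \<in> avail M a (last h)}"

definition out :: "('ag, 'st, 'act, 'p, 'c, 'l) mvcgs \<Rightarrow> 'st \<Rightarrow> 'ag set \<Rightarrow> ('ag \<Rightarrow> 'st list \<Rightarrow> 'act) \<Rightarrow> (nat \<Rightarrow> 'st) set" where
  "out M q A s = {\<rho>. \<rho> 0 = q \<and>
     (\<forall>i. \<exists>\<alpha>\<in>moves M (\<rho> i). (\<forall>a\<in>A. \<alpha> a = s a (map \<rho> [0..<Suc i])) \<and>
            \<rho> (Suc i) = trans M (\<rho> i) \<alpha>)}"

definition suffix :: "nat \<Rightarrow> (nat \<Rightarrow> 'st) \<Rightarrow> nat \<Rightarrow> 'st" where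
  "suffix n \<rho> = (\<lambda>i. \<rho> (i + n))"

datatype ('p, 'c, 'ag) sform =
    Const 'c
  | Prop 'p
  | And "('p, 'c, 'ag) sform" "('p, 'c, 'ag) sform"
  | Or "('p, 'c, 'ag) sform" "('p, 'c, 'ag) sform"
  | Imp "('p, 'c, 'ag) sform" "('p, 'c, 'ag) sform"
  | Ex "'ag set" "('p, 'c, 'ag) pform"
  | All "'ag set" "('p, 'c, 'ag) pform"
and ('p, 'c, 'ag) pform =
    State "('p, 'c, 'ag) sform"
  | PAnd "('p, 'c, 'ag) pform" "('p, 'c, 'ag) pform"
  | POr "('p, 'c, 'ag) pform" "('p, 'c, 'ag) pform"
  | Next "('p, 'c, 'ag) pform"
  | Until "('p, 'c, 'ag) pform" "('p, 'c, 'ag) pform"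
  | WUntil "('p, 'c, 'ag) pform" "('p, 'c, 'ag) pform"

primrec sem_s :: "('ag, 'st, 'act, 'p, 'c, 'l::finite_lattice_complete) mvcgs \<Rightarrow> ('p, 'c, 'ag) sform \<Rightarrow> 'st \<Rightarrow> 'l"
and sem_p :: "('ag, 'st, 'act, 'p, 'c, 'l::finite_lattice_complete) mvcgs \<Rightarrow> ('p, 'c, 'ag) pform \<Rightarrow> (nat \<Rightarrow> 'st) \<Rightarrow> 'l"
where
  "sem_s M (Const c) q = interp M c"
| "sem_s M (Prop p) q = val M p q"
| "sem_s M (And \<phi>1 \<phi>2) q = inf (sem_s M \<phi>1 q) (sem_s M \<phi>2 q)"
| "sem_s M (Or \<phi>1 \<phi>2) q = sup (sem_s M \<phi>1 q) (sem_s M \<phi>2 q)"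
| "sem_s M (Imp \<phi>1 \<phi>2) q = (if sem_s M \<phi>1 q \<le> sem_s M \<phi>2 q then top else bot)"
| "sem_s M (Ex A \<gamma>) q = (SUP s\<in>strategies M A. INF \<rho>\<in>out M q A s. sem_p M \<gamma> \<rho>)"
| "sem_s M (All A \<gamma>) q = (INF s\<in>strategies M A. SUP \<rho>\<in>out M q A s. sem_p M \<gamma> \<rho>)"
| "sem_p M (State \<phi>) \<rho> = sem_s M \<phi> (\<rho> 0)"
| "sem_p M (PAnd \<gamma>1 \<gamma>2) \<rho> = inf (sem_p M \<gamma>1 \<rho>) (sem_p M \<gamma>2 \<rho>)"
| "sem_p M (POr \<gamma>1 \<gamma>2) \<rho> = sup (sem_p M \<gamma>1 \<rho>) (sem_p M \<gamma>2 \<rho>)"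
| "sem_p M (Next \<gamma>) \<rho> = sem_p M \<gamma> (suffix 1 \<rho>)"
| "sem_p M (Until \<gamma>1 \<gamma>2) \<rho> =
     (SUP i. inf (sem_p M \<gamma>2 (suffix i \<rho>)) (INF j\<in>{..<i}. sem_p M \<gamma>1 (suffix j \<rho>)))"
| "sem_p M (WUntil \<gamma>1 \<gamma>2) \<rho> =
     sup (INF i. sem_p M \<gamma>1 (suffix i \<rho>))
         (SUP i. inf (sem_p M \<gamma>2 (suffix i \<rho>)) (INF j\<in>{..<i}. sem_p M \<gamma>1 (suffix j \<rho>)))"

definition translation_condition ::
  "'l::finite_lattice_complete set \<Rightarrow> ('l \<Rightarrow> 'l) \<Rightarrow> ('ag, 'st, 'act, 'p, 'c, 'l) mvcgs \<Rightarrow> bool" where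
  "translation_condition Lf f M \<longleftrightarrow>
     (\<forall>\<phi> q x. x \<in> Lf \<longrightarrow> (sem_s M \<phi> q \<in> f -` {x} \<longleftrightarrow> sem_s (reduce f M) \<phi> q = x)) \<and>
     (\<forall>\<gamma> \<rho> x. is_path M \<rho> \<longrightarrow> x \<in> Lf \<longrightarrow>
        (sem_p M \<gamma> \<rho> \<in> f -` {x} \<longleftrightarrow> sem_p (reduce f M) \<gamma> \<rho> = x))"

end

theory Submission
  imports Defs
begin

text \<open>Because f preserves arbitrary meets and joins, it commutes with the semantics of
  every connective except \<rightarrow>, whose value is \<top> or \<bottom> according to an order test;
  and since every value of f lies in L_f, the translation condition says precisely that
  f commutes with the semantics. This holds for all models iff f reflects the order:
  in a model where all constants denote a and all propositions have value b, the
  formula c \<rightarrow> p is \<bottom> when a \<le> b fails, yet \<top> in the reduced model once f a \<le> f b.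
  For a monotone f, reflecting the order is exactly C1 together with C2.\<close>

lemma Inf_preserving_INF:
  fixes f :: "'a::complete_lattice \<Rightarrow> 'b::complete_lattice"
  assumes "\<And>A. f (Inf A) = Inf (f ` A)"
  shows "f (INF x\<in>S. g x) = (INF x\<in>S. f (g x))"
  by (simp add: assms image_comp)

lemma Sup_preserving_SUP:
  fixes f :: "'a::complete_lattice \<Rightarrow> 'b::complete_lattice"
  assumes "\<And>A. f (Sup A) = Sup (f ` A)"
  shows "f (SUP x\<in>S. g x) = (SUP x\<in>S. f (g x))"
  by (simp add: assms image_comp)

lemma Inf_preserving_inf:
  fixes f :: "'a::complete_lattice \<Rightarrow> 'b::complete_lattice"
  assumes "\<And>A. f (Inf A) = Inf (f ` A)"
  shows "f (inf a b) = inf (f a) (f b)"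
  using assms[of "{a, b}"] by simp

lemma Sup_preserving_sup:
  fixes f :: "'a::complete_lattice \<Rightarrow> 'b::complete_lattice"
  assumes "\<And>A. f (Sup A) = Sup (f ` A)"
  shows "f (sup a b) = sup (f a) (f b)"
  using assms[of "{a, b}"] by simp

lemma Inf_preserving_top:
  fixes f :: "'a::complete_lattice \<Rightarrow> 'b::complete_lattice"
  assumes "\<And>A. f (Inf A) = Inf (f ` A)"
  shows "f top = top"
  using assms[of "{}"] by simp

lemma Sup_preserving_bot:
  fixes f :: "'a::complete_lattice \<Rightarrow> 'b::complete_lattice"
  assumes "\<And>A. f (Sup A) = Sup (f ` A)"
  shows "f bot = bot"
  using assms[of "{}"] by simp

lemma Inf_preserving_mono:
  fixes f :: "'a::complete_lattice \<Rightarrow> 'b::complete_lattice"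
  assumes "\<And>A. f (Inf A) = Inf (f ` A)"
  shows "mono f"
  by (metis Inf_preserving_inf[OF assms] inf.absorb_iff1 monoI)

lemma cond_C1_C2_iff_order_reflecting:
  assumes "mono f"
  shows "cond_C1 f \<and> cond_C2 f \<longleftrightarrow> (\<forall>a b. f a \<le> f b \<longrightarrow> a \<le> b)"
proof
  assume C: "cond_C1 f \<and> cond_C2 f"
  show "\<forall>a b. f a \<le> f b \<longrightarrow> a \<le> b"
  proof (intro allI impI, rule ccontr)
    fix a b
    assume "f a \<le> f b" "\<not> a \<le> b"
    then consider "b < a" | "incomparable a b"
      unfolding incomparable_def by fastforce
    then show False
    proof cases
      case 1
      with C have "f b < f a" unfolding cond_C1_def by blast
      with \<open>f a \<le> f b\<close> show False by simp
    next
      case 2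
      with C have "incomparable (f a) (f b)" unfolding cond_C2_def by blast
      with \<open>f a \<le> f b\<close> show False unfolding incomparable_def by blast
    qed
  qed
next
  assume "\<forall>a b. f a \<le> f b \<longrightarrow> a \<le> b"
  with \<open>mono f\<close> show "cond_C1 f \<and> cond_C2 f"
    unfolding cond_C1_def cond_C2_def incomparable_def
    by (metis monoD order.strict_iff_not)
qed

lemma reduce_simps [simp]:
  "avail (reduce f M) = avail M" "trans (reduce f M) = trans M"
  "val (reduce f M) p q = f (val M p q)" "interp (reduce f M) c = f (interp M c)"
  by (simp_all add: reduce_def)

lemma strategies_reduce [simp]: "strategies (reduce f M) A = strategies M A"
  by (simp add: strategies_def)

lemma moves_reduce [simp]: "moves (reduce f M) q = moves M q"
  by (simp add: moves_def)

lemma out_reduce [simp]: "out (reduce f M) q A s = out M q A s"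
  by (simp add: out_def)

lemma sem_reduce:
  assumes Inf: "\<And>A. f (Inf A) = Inf (f ` A)"
    and Sup: "\<And>A. f (Sup A) = Sup (f ` A)"
    and reflect: "\<And>a b. f a \<le> f b \<Longrightarrow> a \<le> b"
  shows "sem_s (reduce f M) \<phi> q = f (sem_s M \<phi> q)"
    and "sem_p (reduce f M) \<gamma> \<rho> = f (sem_p M \<gamma> \<rho>)"
proof (induction \<phi> and \<gamma> arbitrary: q and \<rho>)
  case (Imp \<phi>1 \<phi>2)
  have "f a \<le> f b \<longleftrightarrow> a \<le> b" for a b
    using reflect monoD[OF Inf_preserving_mono[OF Inf]] by blast
  with Imp show ?case
    by (simp add: Inf_preserving_top[OF Inf] Sup_preserving_bot[OF Sup])
qed (simp_all add: Inf_preserving_INF[OF Inf] Sup_preserving_SUP[OF Sup]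
                   Inf_preserving_inf[OF Inf] Sup_preserving_sup[OF Sup])

lemma translation_condition_iff_sem_reduce:
  assumes "\<And>x. f x \<in> Lf"
  shows "translation_condition Lf f M \<longleftrightarrow>
    (\<forall>\<phi> q. sem_s (reduce f M) \<phi> q = f (sem_s M \<phi> q)) \<and>
    (\<forall>\<gamma> \<rho>. is_path M \<rho> \<longrightarrow> sem_p (reduce f M) \<gamma> \<rho> = f (sem_p M \<gamma> \<rho>))"
  unfolding translation_condition_def using assms by (metis vimage_singleton_eq)

definition constant_model :: "'l \<Rightarrow> 'l \<Rightarrow> ('ag, 'st, 'act, 'p, 'c, 'l) mvcgs" where
  "constant_model a b = \<lparr>avail = (\<lambda>_ _. UNIV), trans = (\<lambda>q _. q), val = (\<lambda>_ _. b), interp = (\<lambda>_. a)\<rparr>"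

lemma wf_constant_model: "wf_mvcgs (constant_model a b)"
  by (simp add: wf_mvcgs_def constant_model_def)

lemma order_reflecting_if_sem_reduce_constant_model:
  fixes f :: "'l::finite_lattice_complete \<Rightarrow> 'l"
  assumes "f bot = bot"
    and commutes: "sem_s (reduce f (constant_model a b)) (Imp (Const c) (Prop p)) q =
                   f (sem_s (constant_model a b) (Imp (Const c) (Prop p)) q)"
    and "f a \<le> f b"
  shows "a \<le> b"
proof (rule ccontr)
  assume "\<not> a \<le> b"
  with commutes \<open>f a \<le> f b\<close> \<open>f bot = bot\<close> have "(top::'l) = bot"
    by (simp add: constant_model_def)
  then have "a \<le> b"
    using order_trans[OF top_greatest[of a], of b] by simp
  with \<open>\<not> a \<le> b\<close> show False ..
qed

theorem theorem5p12:
  fixes Lf :: "'l::finite_lattice_complete set" and f :: "'l \<Rightarrow> 'l"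
  assumes "lattice_reduction_triple Lf f"
  shows "(\<forall>M :: ('ag::finite, 'st::finite, 'act::finite, 'p::finite, 'c, 'l) mvcgs.
            wf_mvcgs M \<longrightarrow> translation_condition Lf f M)
         \<longleftrightarrow> cond_C1 f \<and> cond_C2 f"
proof -
  have Lf: "\<And>x. f x \<in> Lf" and Inf: "\<And>A. f (Inf A) = Inf (f ` A)"
    and Sup: "\<And>A. f (Sup A) = Sup (f ` A)"
    using assms unfolding lattice_reduction_triple_def by blast+
  note C1_C2_iff = cond_C1_C2_iff_order_reflecting[OF Inf_preserving_mono[OF Inf]]
  show ?thesis
  proof
    assume translation: "\<forall>M :: ('ag, 'st, 'act, 'p, 'c, 'l) mvcgs.
      wf_mvcgs M \<longrightarrow> translation_condition Lf f M"
    have "a \<le> b" if "f a \<le> f b" for a b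
    proof -
      let ?M = "constant_model a b :: ('ag, 'st, 'act, 'p, 'c, 'l) mvcgs"
      have "translation_condition Lf f ?M"
        using translation by (simp add: wf_constant_model)
      then have "sem_s (reduce f ?M) \<phi> q = f (sem_s ?M \<phi> q)" for \<phi> q
        by (simp add: translation_condition_iff_sem_reduce[OF Lf])
      then show ?thesis
        by (rule order_reflecting_if_sem_reduce_constant_model[OF Sup_preserving_bot[OF Sup] _ that])
    qed
    then show "cond_C1 f \<and> cond_C2 f"
      using C1_C2_iff by blast
  next
    assume "cond_C1 f \<and> cond_C2 f"
    then have "a \<le> b" if "f a \<le> f b" for a b
      using C1_C2_iff that by blast
    then show "\<forall>M :: ('ag, 'st, 'act, 'p, 'c, 'l) mvcgs. wf_mvcgs M \<longrightarrow> translation_condition Lf f M"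
      by (simp add: translation_condition_iff_sem_reduce[OF Lf] sem_reduce[OF Inf Sup])
  qed
qed

end
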